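(* Let $F$ be a field of characteristic zero and let $Q$ be a finite quiver with vertex set $Q_0=\{1,\dots,n\}$ such that the path algebra $FQ$ is a PI algebra. Let $\pi$ be an arbitrary set of paths in $Q$, let $FQ_\pi$ be the subalgebra of $FQ$ generated by $\pi$, and let \[A_\pi=\{A\in M_n(F)\mid A_{i,j}=0 \text{ whenever there is no path in } \tilde{\pi} \text{ from } i \text{ to } j\},\] where $\tilde\pi$ is the set of all paths of $Q$ that are (nonzero) products of elements of $\pi$. Then $\mathrm{Id}(FQ_\pi)=\mathrm{Id}(A_\pi)$.
   Context: A path of length $\ell$ in $Q$ is a concatenation of $\ell$ composable arrows; $s(p)$ and $t(p)$ denote the starting and terminal vertices of a path $p$; for each vertex $i$ there is a length-zero path $e_i$ with $s(e_i)=t(e_i)=i$. The path algebra $FQ$ is the $F$-vector space with basis all paths of $Q$, with product of paths $p,q$ equal to the concatenation $pq$ if $t(p)=s(q)$ and $0$ otherwise. For a set $\pi$ of paths, $FQ_\pi$ is the (not necessarily unital) subalgebra of $FQ$ generated by $\pi$, i.e. the linear span of $\tilde\pi$. $M_n(F)$ is the algebra of $n\times n$ matrices over $F$; equivalently $A_\pi$ is the linear span of the elementary matrices $e_{s(p)t(p)}$, $p\in\tilde\pi$. For an $F$-algebra $A$, $\mathrm{Id}(A)$ denotes the T-ideal of the free associative algebra $F\langle X\rangle$ on countably many variables consisting of all polynomial identities satisfied by $A$; $A$ is PI if $\mathrm{Id}(A)\neq\{0\}$. *)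

theory Defs
  imports Main "Jordan_Normal_Form.Matrix"
begin

text \<open>A finite quiver with vertex set {0..<n} (the paper's {1..n}, shifted),
  arrow set E (of an arbitrary type 'a), source map s and target map t.
  A path is a pair (i, as): starting vertex i and the list of arrows as
  (composed left to right); (i, []) is the trivial path e_i.\<close>

type_synonym 'a path = "nat \<times> 'a list"

definition quiver :: "nat \<Rightarrow> 'a set \<Rightarrow> ('a \<Rightarrow> nat) \<Rightarrow> ('a \<Rightarrow> nat) \<Rightarrow> bool" where
  "quiver n E s t \<longleftrightarrow> finite E \<and> (\<forall>e\<in>E. s e < n \<and> t e < n)"

definition is_path :: "nat \<Rightarrow> 'a set \<Rightarrow> ('a \<Rightarrow> nat) \<Rightarrow> ('a \<Rightarrow> nat) \<Rightarrow> 'a path \<Rightarrow> bool" where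
  "is_path n E s t p \<longleftrightarrow> fst p < n \<and> set (snd p) \<subseteq> E \<and>
     (snd p \<noteq> [] \<longrightarrow> s (hd (snd p)) = fst p) \<and>
     (\<forall>k. Suc k < length (snd p) \<longrightarrow> t (snd p ! k) = s (snd p ! Suc k))"

definition pstart :: "'a path \<Rightarrow> nat" where
  "pstart p = fst p"

definition pend :: "('a \<Rightarrow> nat) \<Rightarrow> 'a path \<Rightarrow> nat" where
  "pend t p = (if snd p = [] then fst p else t (last (snd p)))"

text \<open>Concatenation pq (only meaningful when pend p = pstart q).\<close>
definition pconcat :: "'a path \<Rightarrow> 'a path \<Rightarrow> 'a path" where
  "pconcat p q = (fst p, snd p @ snd q)"

inductive_set path_closure :: "('a \<Rightarrow> nat) \<Rightarrow> 'a path set \<Rightarrow> 'a path set"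
  for t :: "'a \<Rightarrow> nat" and \<pi> :: "'a path set" where
  base: "p \<in> \<pi> \<Longrightarrow> p \<in> path_closure t \<pi>"
| step: "p \<in> path_closure t \<pi> \<Longrightarrow> q \<in> \<pi> \<Longrightarrow> pend t p = pstart q \<Longrightarrow>
         pconcat p q \<in> path_closure t \<pi>"

definition path_algebra :: "nat \<Rightarrow> 'a set \<Rightarrow> ('a \<Rightarrow> nat) \<Rightarrow> ('a \<Rightarrow> nat) \<Rightarrow> ('a path \<Rightarrow> 'f::field) set" where
  "path_algebra n E s t = {x. finite {p. x p \<noteq> 0} \<and> (\<forall>p. x p \<noteq> 0 \<longrightarrow> is_path n E s t p)}"

text \<open>Product in FQ: (xy)(r) = sum over all factorizations r = pq (as a concatenation).\<close>
definition pa_mult :: "('a \<Rightarrow> nat) \<Rightarrow> ('a path \<Rightarrow> 'f::field) \<Rightarrow> ('a path \<Rightarrow> 'f) \<Rightarrow> 'a path \<Rightarrow> 'f" where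
  "pa_mult t x y r = (\<Sum>k\<in>{0..length (snd r)}.
      x (fst r, take k (snd r)) * y (pend t (fst r, take k (snd r)), drop k (snd r)))"

definition pa_one :: "nat \<Rightarrow> 'a path \<Rightarrow> 'f::field" where
  "pa_one n p = (if snd p = [] \<and> fst p < n then 1 else 0)"

text \<open>FQ_\<pi> = linear span of \<pi>~.\<close>
definition FQ_pi :: "nat \<Rightarrow> 'a set \<Rightarrow> ('a \<Rightarrow> nat) \<Rightarrow> ('a \<Rightarrow> nat) \<Rightarrow> 'a path set \<Rightarrow> ('a path \<Rightarrow> 'f::field) set" where
  "FQ_pi n E s t \<pi> = {x \<in> path_algebra n E s t. \<forall>p. x p \<noteq> 0 \<longrightarrow> p \<in> path_closure t \<pi>}"

definition A_pi :: "nat \<Rightarrow> ('a \<Rightarrow> nat) \<Rightarrow> 'a path set \<Rightarrow> 'f::field mat set" where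
  "A_pi n t \<pi> = {A \<in> carrier_mat n n. \<forall>i<n. \<forall>j<n.
      (\<not> (\<exists>p\<in>path_closure t \<pi>. pstart p = i \<and> pend t p = j)) \<longrightarrow> A $$ (i, j) = 0}"

text \<open>F<X>, X = {x_0, x_1, ...}: finitely supported functions from words
  (lists of variable indices) to F.\<close>
definition free_alg :: "(nat list \<Rightarrow> 'f::field) set" where
  "free_alg = {f. finite {w. f w \<noteq> 0}}"

text \<open>Evaluation in FQ (inside the unital ambient algebra FQ).\<close>
definition pa_eval :: "nat \<Rightarrow> ('a \<Rightarrow> nat) \<Rightarrow> (nat list \<Rightarrow> 'f::field) \<Rightarrow> (nat \<Rightarrow> 'a path \<Rightarrow> 'f) \<Rightarrow> 'a path \<Rightarrow> 'f" where
  "pa_eval n t f xs = (\<lambda>r. \<Sum>w\<in>{w. f w \<noteq> 0}. f w * foldr (pa_mult t) (map xs w) (pa_one n) r)"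

definition mat_eval :: "nat \<Rightarrow> (nat list \<Rightarrow> 'f::field) \<Rightarrow> (nat \<Rightarrow> 'f mat) \<Rightarrow> 'f mat" where
  "mat_eval n f xs = mat n n (\<lambda>(i, j). \<Sum>w\<in>{w. f w \<noteq> 0}. f w * (foldr (*) (map xs w) (1\<^sub>m n)) $$ (i, j))"

definition Id_pa :: "nat \<Rightarrow> ('a \<Rightarrow> nat) \<Rightarrow> ('a path \<Rightarrow> 'f::field) set \<Rightarrow> (nat list \<Rightarrow> 'f) set" where
  "Id_pa n t B = {f \<in> free_alg. \<forall>xs. (\<forall>k. xs k \<in> B) \<longrightarrow> pa_eval n t f xs = (\<lambda>_. 0)}"

definition Id_mat :: "nat \<Rightarrow> 'f::field mat set \<Rightarrow> (nat list \<Rightarrow> 'f) set" where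
  "Id_mat n B = {f \<in> free_alg. \<forall>xs. (\<forall>k. xs k \<in> B) \<longrightarrow> mat_eval n f xs = 0\<^sub>m n n}"

end

theory Submission
  imports Defs "HOL-Computational_Algebra.Polynomial" "HOL-Library.Multiset"
begin

(* A weight G on words of arrows with G [] = 1 and G (u @ w) = G u * G w turns the map sending a
   path p from i to j to G(p) e_ij into a unital homomorphism FQ -> M_n(F). It maps FQ_pi into
   A_pi, and for G = 1 onto A_pi, because A_pi is spanned by the e_ij for which some path of pi~
   runs from i to j. Hence every identity of FQ_pi is an identity of A_pi.

   Conversely, if some vertex carries cycles u, w with uw <> wu, the words (uw)^k (wu) form a code,
   so the corresponding paths generate a free subalgebra and FQ satisfies no identity. So if FQ is
   PI, cycles at a common vertex commute, and then a path is determined by its endpoints and its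
   multiset of arrows. Taking G(w) = l^deg(w), where deg encodes the multiset of arrows of w in a
   large base, the (i, j) entry of the image of Y is a polynomial in l whose coefficients are the
   coefficients of Y on the paths from i to j. As F is infinite, these homomorphisms jointly
   separate FQ; applied to f(x_1, x_2, ...) for f an identity of A_pi and x_k in FQ_pi, this shows
   that f is an identity of FQ_pi. *)

lemma is_path_iff:
  "is_path n E s t (i, xs) \<longleftrightarrow> i < n \<and> set xs \<subseteq> E \<and> (xs \<noteq> [] \<longrightarrow> s (hd xs) = i) \<and>
     successively (\<lambda>a b. t a = s b) xs"
  unfolding is_path_def by (auto simp: successively_conv_nth)

lemma pend_Pair: "pend t (i, xs) = (if xs = [] then i else t (last xs))"
  by (simp add: pend_def)

lemma pend_append: "pend t (i, xs @ ys) = pend t (pend t (i, xs), ys)"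
  by (simp add: pend_Pair)

lemma is_path_append:
  assumes "is_path n E s t (i, xs)" "is_path n E s t (pend t (i, xs), ys)"
  shows "is_path n E s t (i, xs @ ys)"
  using assms unfolding is_path_iff pend_Pair
  by (auto simp: successively_append_iff split: if_splits)

lemma is_path_pconcat:
  assumes "is_path n E s t p" "is_path n E s t q" "pend t p = fst q"
  shows "is_path n E s t (pconcat p q)"
  using assms is_path_append[of n E s t "fst p" "snd p" "snd q"]
  by (cases p, cases q) (simp add: pconcat_def)

lemma is_path_appendD1:
  assumes "is_path n E s t (i, xs @ ys)"
  shows "is_path n E s t (i, xs)"
  using assms unfolding is_path_iff by (auto simp: successively_append_iff)

lemma is_path_appendD2:
  assumes "quiver n E s t" "is_path n E s t (i, xs @ ys)"
  shows "is_path n E s t (pend t (i, xs), ys)"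
  using assms unfolding is_path_iff pend_Pair quiver_def
  by (cases ys) (auto simp: successively_append_iff dest!: last_in_set)

lemma is_path_pend_eq_source:
  assumes "is_path n E s t (i, xs @ a # ys)"
  shows "pend t (i, xs) = s a"
  using assms unfolding is_path_iff pend_Pair by (auto simp: successively_append_iff)

lemma pend_less:
  assumes "quiver n E s t" "is_path n E s t p"
  shows "pend t p < n"
  using assms unfolding is_path_def pend_def quiver_def by (auto dest!: last_in_set)

lemma path_closure_is_path:
  assumes "\<forall>p\<in>\<pi>. is_path n E s t p" "p \<in> path_closure t \<pi>"
  shows "is_path n E s t p"
  using assms(2)
proof induction
  case (step p q)
  then show ?case using assms(1) is_path_pconcat[of n E s t p q] by (simp add: pstart_def)
qed (use assms(1) in blast)

definition supp :: "('b \<Rightarrow> 'f::zero) \<Rightarrow> 'b set" where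
  "supp x = {p. x p \<noteq> 0}"

lemma path_algebraD:
  assumes "x \<in> path_algebra n E s t"
  shows "finite (supp x)" "p \<in> supp x \<Longrightarrow> is_path n E s t p"
  using assms unfolding path_algebra_def supp_def by blast+

lemma path_algebraI:
  assumes "finite (supp x)" "\<And>p. p \<in> supp x \<Longrightarrow> is_path n E s t p"
  shows "x \<in> path_algebra n E s t"
  using assms by (auto simp: path_algebra_def supp_def)

definition composable :: "('a \<Rightarrow> nat) \<Rightarrow> 'a path set \<Rightarrow> 'a path set \<Rightarrow> ('a path \<times> 'a path) set" where
  "composable t P Q = {(p, q) \<in> P \<times> Q. pend t p = fst q}"

lemma finite_composable: "finite P \<Longrightarrow> finite Q \<Longrightarrow> finite (composable t P Q)"
  unfolding composable_def by (rule finite_subset[of _ "P \<times> Q"]) auto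

lemma pa_mult_eq_sum_factorizations:
  fixes x y :: "'a path \<Rightarrow> 'f::field"
  assumes "finite (supp x)" "finite (supp y)"
  shows "pa_mult t x y r =
    (\<Sum>(p, q) \<in> {(p, q) \<in> composable t (supp x) (supp y). pconcat p q = r}. x p * y q)"
proof -
  define P where "P k = (fst r, take k (snd r))" for k
  define Q where "Q k = (pend t (P k), drop k (snd r))" for k
  define K where "K = {k \<in> {0..length (snd r)}. x (P k) \<noteq> 0 \<and> y (Q k) \<noteq> 0}"
  have "pa_mult t x y r = (\<Sum>k\<in>{0..length (snd r)}. x (P k) * y (Q k))"
    unfolding pa_mult_def P_def Q_def by simp
  also have "\<dots> = (\<Sum>k\<in>K. x (P k) * y (Q k))"
    by (rule sum.mono_neutral_right) (auto simp: K_def)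
  also have "\<dots> = (\<Sum>(p, q) \<in> (\<lambda>k. (P k, Q k)) ` K. x p * y q)"
  proof (subst sum.reindex)
    show "inj_on (\<lambda>k. (P k, Q k)) K"
      by (rule inj_onI) (auto simp: K_def P_def, metis length_take min.absorb2)
  qed simp
  also have "(\<lambda>k. (P k, Q k)) ` K = {(p, q) \<in> composable t (supp x) (supp y). pconcat p q = r}"
  proof (intro equalityI subsetI)
    fix z assume "z \<in> {(p, q) \<in> composable t (supp x) (supp y). pconcat p q = r}"
    then obtain p q where z: "z = (p, q)" "x p \<noteq> 0" "y q \<noteq> 0" "pend t p = fst q"
      and r: "r = (fst p, snd p @ snd q)"
      by (auto simp: composable_def supp_def pconcat_def)
    have "P (length (snd p)) = p" "Q (length (snd p)) = q"
      using z(4) by (auto simp: P_def Q_def r)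
    moreover have "length (snd p) \<in> K"
      using z calculation by (auto simp: K_def r)
    ultimately show "z \<in> (\<lambda>k. (P k, Q k)) ` K"
      using z(1) by force
  qed (auto simp: K_def supp_def P_def Q_def pconcat_def composable_def)
  finally show ?thesis .
qed

lemma supp_pa_mult_subset:
  fixes x y :: "'a path \<Rightarrow> 'f::field"
  assumes "finite (supp x)" "finite (supp y)"
  shows "supp (pa_mult t x y) \<subseteq> case_prod pconcat ` composable t (supp x) (supp y)"
proof
  fix r assume "r \<in> supp (pa_mult t x y)"
  then have "pa_mult t x y r \<noteq> 0" by (simp add: supp_def)
  then have "{(p, q) \<in> composable t (supp x) (supp y). pconcat p q = r} \<noteq> {}"
    unfolding pa_mult_eq_sum_factorizations[OF assms] by (metis sum.empty)
  then show "r \<in> case_prod pconcat ` composable t (supp x) (supp y)" by force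
qed

lemma sum_pa_mult:
  fixes x y :: "'a path \<Rightarrow> 'f::field"
  assumes "finite (supp x)" "finite (supp y)"
  shows "(\<Sum>r \<in> case_prod pconcat ` composable t (supp x) (supp y). pa_mult t x y r * h r) =
    (\<Sum>(p, q) \<in> composable t (supp x) (supp y). x p * y q * h (pconcat p q))"
proof -
  let ?Z = "composable t (supp x) (supp y)"
  have "(\<Sum>r \<in> case_prod pconcat ` ?Z. pa_mult t x y r * h r) =
      (\<Sum>r \<in> case_prod pconcat ` ?Z. \<Sum>(p, q) \<in> {z \<in> ?Z. case_prod pconcat z = r}. x p * y q * h (pconcat p q))"
    unfolding pa_mult_eq_sum_factorizations[OF assms] sum_distrib_right
    by (intro sum.cong refl) (auto simp: case_prod_unfold)
  also have "\<dots> = (\<Sum>(p, q) \<in> ?Z. x p * y q * h (pconcat p q))"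
    by (rule sum.group) (use assms finite_composable in auto)
  finally show ?thesis .
qed

lemma pa_mult_in_path_algebra:
  assumes "x \<in> path_algebra n E s t" "y \<in> path_algebra n E s t"
  shows "pa_mult t x y \<in> path_algebra n E s t"
proof (rule path_algebraI)
  note fin = path_algebraD(1)[OF assms(1)] path_algebraD(1)[OF assms(2)]
  show "finite (supp (pa_mult t x y))"
    by (rule finite_surj[OF finite_composable[OF fin] supp_pa_mult_subset[OF fin]])
  fix r assume "r \<in> supp (pa_mult t x y)"
  then obtain p q where "p \<in> supp x" "q \<in> supp y" "pend t p = fst q" "r = pconcat p q"
    using supp_pa_mult_subset[OF fin, of t] by (force simp: composable_def)
  then show "is_path n E s t r"
    using path_algebraD(2) assms is_path_pconcat by metis
qed

lemma supp_pa_one: "supp (pa_one n :: 'a path \<Rightarrow> 'f::field) = (\<lambda>v. (v, [])) ` {..<n}"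
  by (auto simp: supp_def pa_one_def)

lemma pa_one_in_path_algebra: "(pa_one n :: 'a path \<Rightarrow> 'f::field) \<in> path_algebra n E s t"
  by (rule path_algebraI) (auto simp: supp_pa_one is_path_def)

lemma lincomb_in_path_algebra:
  assumes "finite W" "\<And>w. w \<in> W \<Longrightarrow> M w \<in> path_algebra n E s t"
  shows "(\<lambda>r. \<Sum>w\<in>W. c w * M w r :: 'f::field) \<in> path_algebra n E s t"
proof (rule path_algebraI)
  have "supp (\<lambda>r. \<Sum>w\<in>W. c w * M w r) \<subseteq> (\<Union>w\<in>W. supp (M w))"
    by (auto simp: supp_def intro: ccontr)
  moreover have "finite (\<Union>w\<in>W. supp (M w))" using assms path_algebraD(1) by blast
  moreover have "is_path n E s t p" if "p \<in> (\<Union>w\<in>W. supp (M w))" for p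
    using that assms(2) path_algebraD(2) by blast
  ultimately show "finite (supp (\<lambda>r. \<Sum>w\<in>W. c w * M w r))" "\<And>p. p \<in> supp (\<lambda>r. \<Sum>w\<in>W. c w * M w r) \<Longrightarrow> is_path n E s t p"
    by (auto intro: finite_subset)
qed

section \<open>Weighted matrix representations\<close>

definition multiplicative_weight :: "('a list \<Rightarrow> 'f::field) \<Rightarrow> bool" where
  "multiplicative_weight G \<longleftrightarrow> G [] = 1 \<and> (\<forall>xs ys. G (xs @ ys) = G xs * G ys)"

definition path_matrix :: "nat \<Rightarrow> ('a \<Rightarrow> nat) \<Rightarrow> ('a list \<Rightarrow> 'f::field) \<Rightarrow> ('a path \<Rightarrow> 'f) \<Rightarrow> 'f mat" where
  "path_matrix n t G x =
     mat n n (\<lambda>(i, j). \<Sum>p\<in>supp x. if fst p = i \<and> pend t p = j then x p * G (snd p) else 0)"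

lemma path_matrix_dim [simp]:
  "dim_row (path_matrix n t G x) = n" "dim_col (path_matrix n t G x) = n"
  "path_matrix n t G x \<in> carrier_mat n n"
  by (simp_all add: path_matrix_def)

lemma path_matrix_entry:
  assumes "finite S" "supp x \<subseteq> S" "i < n" "j < n"
  shows "path_matrix n t G x $$ (i, j) =
    (\<Sum>p\<in>S. if fst p = i \<and> pend t p = j then x p * G (snd p) else 0)"
  using assms by (simp add: path_matrix_def, intro sum.mono_neutral_left) (auto simp: supp_def)

lemma path_matrix_zero: "path_matrix n t G (\<lambda>_. 0 :: 'f::field) = 0\<^sub>m n n"
  by (rule eq_matI) (auto simp: path_matrix_def supp_def)

lemma path_matrix_pa_one:
  assumes "multiplicative_weight G"
  shows "path_matrix n t G (pa_one n :: 'a path \<Rightarrow> 'f::field) = 1\<^sub>m n"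
proof (rule eq_matI)
  fix i j assume "i < dim_row (1\<^sub>m n :: 'f mat)" "j < dim_col (1\<^sub>m n :: 'f mat)"
  then have ij: "i < n" "j < n" by auto
  have "path_matrix n t G (pa_one n :: 'a path \<Rightarrow> 'f) $$ (i, j) =
      (\<Sum>v\<in>{..<n}. if v = i \<and> v = j then 1 else 0)"
    using ij assms
    by (auto simp: path_matrix_def supp_pa_one sum.reindex inj_on_def pend_def pa_one_def
        multiplicative_weight_def intro!: sum.cong)
  also have "\<dots> = (1\<^sub>m n :: 'f mat) $$ (i, j)"
    using ij by (cases "i = j") (auto intro!: sum.neutral)
  finally show "path_matrix n t G (pa_one n :: 'a path \<Rightarrow> 'f) $$ (i, j) = (1\<^sub>m n :: 'f mat) $$ (i, j)" .
qed auto

lemma path_matrix_pa_mult_entry: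
  fixes x y :: "'a path \<Rightarrow> 'f::field"
  assumes "multiplicative_weight G" "finite (supp x)" "finite (supp y)" "i < n" "j < n"
  shows "path_matrix n t G (pa_mult t x y) $$ (i, j) =
    (\<Sum>(p, q) \<in> composable t (supp x) (supp y).
       if fst p = i \<and> pend t q = j then x p * G (snd p) * (y q * G (snd q)) else 0)"
proof -
  let ?Z = "composable t (supp x) (supp y)"
  let ?h = "\<lambda>r. if fst r = i \<and> pend t r = j then G (snd r) else 0"
  have "path_matrix n t G (pa_mult t x y) $$ (i, j) =
      (\<Sum>r \<in> case_prod pconcat ` ?Z. pa_mult t x y r * ?h r)"
    using assms supp_pa_mult_subset[of x y t] finite_imageI[OF finite_composable[OF assms(2,3)]]
    by (subst path_matrix_entry[where S = "case_prod pconcat ` ?Z"]) (auto intro!: sum.cong)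
  also have "\<dots> = (\<Sum>(p, q) \<in> ?Z. x p * y q * ?h (pconcat p q))"
    using assms by (simp add: sum_pa_mult)
  also have "\<dots> = (\<Sum>(p, q) \<in> ?Z. if fst p = i \<and> pend t q = j then x p * G (snd p) * (y q * G (snd q)) else 0)"
    using assms(1)
    by (intro sum.cong refl)
       (auto simp: composable_def pconcat_def pend_Pair multiplicative_weight_def mult_ac)
  finally show ?thesis .
qed

lemma path_matrix_mult_entry:
  fixes x y :: "'a path \<Rightarrow> 'f::field"
  assumes "quiver n E s t" "x \<in> path_algebra n E s t" "y \<in> path_algebra n E s t" "i < n" "j < n"
  shows "(path_matrix n t G x * path_matrix n t G y) $$ (i, j) =
    (\<Sum>(p, q) \<in> composable t (supp x) (supp y).
       if fst p = i \<and> pend t q = j then x p * G (snd p) * (y q * G (snd q)) else 0)"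
proof -
  let ?a = "\<lambda>p k. if fst p = i \<and> pend t p = k then x p * G (snd p) else 0"
  let ?b = "\<lambda>q k. if fst q = k \<and> pend t q = j then y q * G (snd q) else 0"
  let ?c = "\<lambda>p q. if fst p = i \<and> pend t q = j then x p * G (snd p) * (y q * G (snd q)) else 0"
  have fin: "finite (supp x)" "finite (supp y)"
    using assms(2,3) by (auto dest: path_algebraD)
  have "(path_matrix n t G x * path_matrix n t G y) $$ (i, j) =
      (\<Sum>k\<in>{0..<n}. (\<Sum>p\<in>supp x. ?a p k) * (\<Sum>q\<in>supp y. ?b q k))"
    using assms(4,5) by (simp add: path_matrix_def scalar_prod_def)
  also have "\<dots> = (\<Sum>p\<in>supp x. \<Sum>q\<in>supp y. \<Sum>k\<in>{0..<n}. ?a p k * ?b q k)"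
    by (simp add: sum_product sum.swap[of _ "{0..<n}"])
  also have "\<dots> = (\<Sum>p\<in>supp x. \<Sum>q\<in>supp y. if pend t p = fst q then ?c p q else 0)"
  proof (intro sum.cong refl)
    fix p q assume "p \<in> supp x"
    then have "pend t p < n"
      using assms(1,2) path_algebraD(2) pend_less by blast
    then show "(\<Sum>k\<in>{0..<n}. ?a p k * ?b q k) = (if pend t p = fst q then ?c p q else 0)"
      by (simp add: if_distrib[of "\<lambda>u. u * _"] sum.delta' cong: if_cong)
  qed
  also have "\<dots> = (\<Sum>(p, q) \<in> supp x \<times> supp y. if pend t p = fst q then ?c p q else 0)"
    by (simp add: sum.cartesian_product)
  also have "\<dots> = (\<Sum>(p, q) \<in> composable t (supp x) (supp y). ?c p q)"
    using fin by (intro sum.mono_neutral_cong_right) (auto simp: composable_def split: if_splits)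
  finally show ?thesis .
qed

lemma path_matrix_pa_mult:
  assumes "quiver n E s t" "multiplicative_weight G"
    and "x \<in> path_algebra n E s t" "y \<in> path_algebra n E s t"
  shows "path_matrix n t G (pa_mult t x y) = path_matrix n t G x * path_matrix n t G y"
proof (rule eq_matI)
  fix i j assume "i < dim_row (path_matrix n t G x * path_matrix n t G y)"
    "j < dim_col (path_matrix n t G x * path_matrix n t G y)"
  then have "i < n" "j < n" by auto
  with assms path_algebraD(1)[OF assms(3)] path_algebraD(1)[OF assms(4)]
  show "path_matrix n t G (pa_mult t x y) $$ (i, j) = (path_matrix n t G x * path_matrix n t G y) $$ (i, j)"
    by (simp only: path_matrix_pa_mult_entry path_matrix_mult_entry)
qed auto

lemma foldr_pa_mult_in_path_algebra:
  fixes X :: "nat \<Rightarrow> 'a path \<Rightarrow> 'f::field"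
  assumes "\<forall>k. X k \<in> path_algebra n E s t"
  shows "foldr (pa_mult t) (map X w) (pa_one n) \<in> path_algebra n E s t"
  by (induction w) (use assms in \<open>auto simp: pa_one_in_path_algebra pa_mult_in_path_algebra\<close>)

lemma path_matrix_foldr_pa_mult:
  fixes X :: "nat \<Rightarrow> 'a path \<Rightarrow> 'f::field"
  assumes "quiver n E s t" "multiplicative_weight G" "\<forall>k. X k \<in> path_algebra n E s t"
  shows "path_matrix n t G (foldr (pa_mult t) (map X w) (pa_one n)) =
      foldr (*) (map (\<lambda>k. path_matrix n t G (X k)) w) (1\<^sub>m n)"
proof (induction w)
  case (Cons k w)
  then show ?case
    using assms foldr_pa_mult_in_path_algebra[OF assms(3), of w] path_matrix_pa_mult[OF assms(1,2)]
    by simp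
qed (simp add: path_matrix_pa_one assms(2))

lemma path_matrix_lincomb:
  fixes M :: "'b \<Rightarrow> 'a path \<Rightarrow> 'f::field"
  assumes "finite W" "\<And>w. w \<in> W \<Longrightarrow> finite (supp (M w))"
  shows "path_matrix n t G (\<lambda>r. \<Sum>w\<in>W. c w * M w r) =
    mat n n (\<lambda>(i, j). \<Sum>w\<in>W. c w * path_matrix n t G (M w) $$ (i, j))"
proof (rule eq_matI)
  let ?S = "\<Union>w\<in>W. supp (M w)"
  have S: "finite ?S" "supp (\<lambda>r. \<Sum>w\<in>W. c w * M w r) \<subseteq> ?S" "\<And>w. w \<in> W \<Longrightarrow> supp (M w) \<subseteq> ?S"
    using assms by (auto simp: supp_def intro: ccontr)
  fix i j assume "i < dim_row (mat n n (\<lambda>(i, j). \<Sum>w\<in>W. c w * path_matrix n t G (M w) $$ (i, j)))"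
    "j < dim_col (mat n n (\<lambda>(i, j). \<Sum>w\<in>W. c w * path_matrix n t G (M w) $$ (i, j)))"
  then have ij: "i < n" "j < n" by auto
  have "path_matrix n t G (\<lambda>r. \<Sum>w\<in>W. c w * M w r) $$ (i, j) =
      (\<Sum>r\<in>?S. \<Sum>w\<in>W. c w * (if fst r = i \<and> pend t r = j then M w r * G (snd r) else 0))"
    unfolding path_matrix_entry[OF S(1,2) ij]
    by (intro sum.cong refl) (auto simp: sum_distrib_right mult.assoc)
  also have "\<dots> = (\<Sum>w\<in>W. \<Sum>r\<in>?S. c w * (if fst r = i \<and> pend t r = j then M w r * G (snd r) else 0))"
    by (rule sum.swap)
  also have "\<dots> = (\<Sum>w\<in>W. c w * path_matrix n t G (M w) $$ (i, j))"
    by (intro sum.cong refl) (simp add: path_matrix_entry[OF S(1) S(3) ij] sum_distrib_left)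
  finally show "path_matrix n t G (\<lambda>r. \<Sum>w\<in>W. c w * M w r) $$ (i, j) =
      mat n n (\<lambda>(i, j). \<Sum>w\<in>W. c w * path_matrix n t G (M w) $$ (i, j)) $$ (i, j)"
    using ij by simp
qed (auto simp: path_matrix_def)

lemma pa_eval_in_path_algebra:
  assumes "\<forall>k. X k \<in> path_algebra n E s t" "f \<in> free_alg"
  shows "pa_eval n t f X \<in> path_algebra n E s t"
  unfolding pa_eval_def
  by (rule lincomb_in_path_algebra)
     (use assms foldr_pa_mult_in_path_algebra in \<open>auto simp: free_alg_def\<close>)

lemma path_matrix_pa_eval:
  assumes "quiver n E s t" "multiplicative_weight G" "\<forall>k. X k \<in> path_algebra n E s t"
    and "f \<in> free_alg"
  shows "path_matrix n t G (pa_eval n t f X) = mat_eval n f (\<lambda>k. path_matrix n t G (X k))"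
proof -
  have "finite (supp (foldr (pa_mult t) (map X w) (pa_one n)))" for w
    using path_algebraD(1)[OF foldr_pa_mult_in_path_algebra[OF assms(3)]] .
  then show ?thesis
    unfolding pa_eval_def mat_eval_def using assms
    by (subst path_matrix_lincomb) (auto simp: free_alg_def path_matrix_foldr_pa_mult)
qed

section \<open>Identities of FQ_pi are identities of A_pi\<close>

lemma path_matrix_in_A_pi:
  assumes "x \<in> FQ_pi n E s t \<pi>"
  shows "path_matrix n t G x \<in> A_pi n t \<pi>"
  unfolding A_pi_def
proof (intro CollectI conjI allI impI path_matrix_dim)
  fix i j assume "i < n" "j < n" and no_path: "\<not> (\<exists>p\<in>path_closure t \<pi>. pstart p = i \<and> pend t p = j)"
  have "(if fst p = i \<and> pend t p = j then x p * G (snd p) else 0) = 0" if "p \<in> supp x" for p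
  proof -
    have "p \<in> path_closure t \<pi>"
      using assms that unfolding FQ_pi_def supp_def by blast
    then show ?thesis using no_path by (auto simp: pstart_def)
  qed
  with \<open>i < n\<close> \<open>j < n\<close> show "path_matrix n t G x $$ (i, j) = 0"
    by (simp add: path_matrix_def)
qed

lemma path_matrix_on_representatives:
  assumes "finite R" "inj_on (\<lambda>r. (fst r, pend t r)) R" "i < n" "j < n"
  shows "path_matrix n t (\<lambda>_. 1) (\<lambda>r. if r \<in> R then c (fst r, pend t r) else 0) $$ (i, j) =
    (if \<exists>r\<in>R. fst r = i \<and> pend t r = j then c (i, j) else (0 :: 'f::field))"
proof -
  let ?ends = "\<lambda>r. (fst r, pend t r)"
  have "path_matrix n t (\<lambda>_. 1) (\<lambda>r. if r \<in> R then c (?ends r) else 0) $$ (i, j) =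
      (\<Sum>r\<in>R. if ?ends r = (i, j) then c (i, j) else 0)"
    using assms(1,3,4) by (subst path_matrix_entry[where S = R]) (auto simp: supp_def intro!: sum.cong)
  also have "\<dots> = (\<Sum>e\<in>?ends ` R. if e = (i, j) then c (i, j) else 0)"
    using sum.reindex[OF assms(2), of "\<lambda>e. if e = (i, j) then c (i, j) else 0"] by simp
  also have "\<dots> = (if (i, j) \<in> ?ends ` R then c (i, j) else 0)"
    using assms(1) by (simp add: sum.delta')
  finally show ?thesis by (auto simp: image_iff)
qed

lemma path_closure_representatives:
  obtains R where "finite R" "R \<subseteq> path_closure t \<pi>" "inj_on (\<lambda>r. (fst r, pend t r)) R"
    and "\<forall>i<n. \<forall>j<n. (\<exists>p\<in>path_closure t \<pi>. fst p = i \<and> pend t p = j) \<longrightarrow>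
      (\<exists>r\<in>R. fst r = i \<and> pend t r = j)"
proof
  let ?connected = "\<lambda>i j. \<exists>p. p \<in> path_closure t \<pi> \<and> fst p = i \<and> pend t p = j"
  define path where "path i j = (SOME p. p \<in> path_closure t \<pi> \<and> fst p = i \<and> pend t p = j)" for i j
  have path: "path i j \<in> path_closure t \<pi>" "fst (path i j) = i" "pend t (path i j) = j"
    if "?connected i j" for i j
    using someI_ex[OF that] by (simp_all add: path_def)
  define R where "R = (\<lambda>(i, j). path i j) ` Set.filter (case_prod ?connected) ({..<n} \<times> {..<n})"
  have R_path: "\<exists>i j. ?connected i j \<and> r = path i j" if "r \<in> R" for r
    using that by (auto simp: R_def)
  show "finite R"
    by (simp add: R_def)
  show "R \<subseteq> path_closure t \<pi>"
    using R_path path(1) by blast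
  show "inj_on (\<lambda>r. (fst r, pend t r)) R"
  proof (rule inj_onI)
    fix r r' assume "r \<in> R" "r' \<in> R" "(fst r, pend t r) = (fst r', pend t r')"
    then show "r = r'" using R_path path(2,3) by (metis prod.inject)
  qed
  have "path i j \<in> R" if "i < n" "j < n" "?connected i j" for i j
    unfolding R_def using that by (intro image_eqI[of _ _ "(i, j)"]) auto
  then show "\<forall>i<n. \<forall>j<n. (\<exists>p\<in>path_closure t \<pi>. fst p = i \<and> pend t p = j) \<longrightarrow>
      (\<exists>r\<in>R. fst r = i \<and> pend t r = j)"
    using path(2,3) by blast
qed

lemma A_pi_subset_path_matrix_image:
  assumes "\<forall>p\<in>\<pi>. is_path n E s t p" "B \<in> A_pi n t \<pi>"
  shows "\<exists>x \<in> FQ_pi n E s t \<pi>. path_matrix n t (\<lambda>_. 1) x = (B :: 'f::field mat)"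
proof -
  obtain R where R: "finite R" "R \<subseteq> path_closure t \<pi>" "inj_on (\<lambda>r. (fst r, pend t r)) R"
    and represented: "\<forall>i<n. \<forall>j<n. (\<exists>p\<in>path_closure t \<pi>. fst p = i \<and> pend t p = j) \<longrightarrow>
      (\<exists>r\<in>R. fst r = i \<and> pend t r = j)"
    by (rule path_closure_representatives)
  define x where "x r = (if r \<in> R then B $$ (fst r, pend t r) else 0)" for r
  have "supp x \<subseteq> R"
    by (auto simp: x_def supp_def)
  then have "x \<in> FQ_pi n E s t \<pi>"
    using R path_closure_is_path[OF assms(1)] finite_subset[OF _ R(1)]
    unfolding FQ_pi_def path_algebra_def supp_def by blast
  moreover have "path_matrix n t (\<lambda>_. 1) x = B"
  proof (rule eq_matI)
    show B: "dim_row (path_matrix n t (\<lambda>_. 1) x) = dim_row B" "dim_col (path_matrix n t (\<lambda>_. 1) x) = dim_col B"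
      using assms(2) by (auto simp: A_pi_def)
    fix i j assume "i < dim_row B" "j < dim_col B"
    then have ij: "i < n" "j < n" using B by simp_all
    have "B $$ (i, j) = 0" if no_rep: "\<not> (\<exists>r\<in>R. fst r = i \<and> pend t r = j)"
    proof -
      have "\<not> (\<exists>p\<in>path_closure t \<pi>. pstart p = i \<and> pend t p = j)"
        using represented ij no_rep unfolding pstart_def by blast
      then show ?thesis
        using assms(2) ij unfolding A_pi_def by blast
    qed
    then show "path_matrix n t (\<lambda>_. 1) x $$ (i, j) = B $$ (i, j)"
      unfolding x_def path_matrix_on_representatives[OF R(1,3) ij] by auto
  qed
  ultimately show ?thesis by blast
qed

lemma Id_pa_FQ_pi_subset_Id_mat_A_pi:
  assumes "quiver n E s t" "\<forall>p\<in>\<pi>. is_path n E s t p"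
  shows "Id_pa n t (FQ_pi n E s t \<pi> :: ('a path \<Rightarrow> 'f::field) set) \<subseteq> Id_mat n (A_pi n t \<pi>)"
proof
  fix f assume f: "f \<in> Id_pa n t (FQ_pi n E s t \<pi> :: ('a path \<Rightarrow> 'f) set)"
  have "mat_eval n f B = 0\<^sub>m n n" if B: "\<forall>k. B k \<in> A_pi n t \<pi>" for B
  proof -
    have "\<forall>k. \<exists>x. x \<in> FQ_pi n E s t \<pi> \<and> path_matrix n t (\<lambda>_. 1) x = B k"
      using A_pi_subset_path_matrix_image[OF assms(2)] B by blast
    from choice[OF this] obtain X
      where X: "\<forall>k. X k \<in> FQ_pi n E s t \<pi>" "\<forall>k. path_matrix n t (\<lambda>_. 1) (X k) = B k"
      by blast
    have "mat_eval n f B = path_matrix n t (\<lambda>_. 1) (pa_eval n t f X)"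
      using X f path_matrix_pa_eval[OF assms(1), of "\<lambda>_. 1" X f]
      by (simp add: Id_pa_def FQ_pi_def multiplicative_weight_def)
    also have "\<dots> = 0\<^sub>m n n"
      using X f by (simp add: Id_pa_def path_matrix_zero)
    finally show ?thesis .
  qed
  then show "f \<in> Id_mat n (A_pi n t \<pi>)"
    using f by (simp add: Id_pa_def Id_mat_def)
qed

section \<open>Cycles and the PI property\<close>

definition is_cycle :: "nat \<Rightarrow> 'a set \<Rightarrow> ('a \<Rightarrow> nat) \<Rightarrow> ('a \<Rightarrow> nat) \<Rightarrow> nat \<Rightarrow> 'a list \<Rightarrow> bool" where
  "is_cycle n E s t v u \<longleftrightarrow> is_path n E s t (v, u) \<and> pend t (v, u) = v"

definition cycles_commute :: "nat \<Rightarrow> 'a set \<Rightarrow> ('a \<Rightarrow> nat) \<Rightarrow> ('a \<Rightarrow> nat) \<Rightarrow> bool" where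
  "cycles_commute n E s t \<longleftrightarrow>
     (\<forall>v u w. is_cycle n E s t v u \<and> is_cycle n E s t v w \<longrightarrow> u @ w = w @ u)"

lemma is_cycle_append:
  "is_cycle n E s t v u \<Longrightarrow> is_cycle n E s t v w \<Longrightarrow> is_cycle n E s t v (u @ w)"
  using is_path_append[of n E s t v u w] pend_append[of t v u w] by (simp add: is_cycle_def)

lemma is_cycle_concat_replicate:
  assumes "is_cycle n E s t v u"
  shows "is_cycle n E s t v (concat (replicate k u))"
proof (induction k)
  case 0
  then show ?case using assms by (simp add: is_cycle_def is_path_def pend_def)
next
  case (Suc k)
  then show ?case using is_cycle_append[OF assms] by simp
qed

definition pa_basis :: "'a path \<Rightarrow> 'a path \<Rightarrow> 'f::field" where
  "pa_basis p = (\<lambda>r. if r = p then 1 else 0)"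

lemma pa_mult_pa_basis_left:
  fixes y :: "'a path \<Rightarrow> 'f::field"
  shows "pa_mult t (pa_basis p) y r =
    (if fst r = fst p \<and> take (length (snd p)) (snd r) = snd p
     then y (pend t p, drop (length (snd p)) (snd r)) else 0)"
proof -
  let ?m = "length (snd p)"
  have "pa_mult t (pa_basis p) y r = (\<Sum>k\<in>{0..length (snd r)}.
      if k = ?m then (if fst r = fst p \<and> take ?m (snd r) = snd p then y (pend t p, drop ?m (snd r)) else 0)
      else 0)"
    unfolding pa_mult_def by (intro sum.cong refl) (auto simp: pa_basis_def)
  also have "\<dots> = (if fst r = fst p \<and> take ?m (snd r) = snd p then y (pend t p, drop ?m (snd r)) else 0)"
    by (subst sum.delta) (auto dest: arg_cong[where f = length])
  finally show ?thesis .
qed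

lemma pa_mult_pa_basis_pa_one:
  assumes "pend t p < n"
  shows "pa_mult t (pa_basis p) (pa_one n) = (pa_basis p :: 'a path \<Rightarrow> 'f::field)"
proof
  fix r :: "'a path"
  have "take (length (snd p)) (snd r) = snd p \<and> drop (length (snd p)) (snd r) = [] \<longleftrightarrow> snd r = snd p"
    by (metis append_Nil2 append_take_drop_id drop_all order_refl take_all_iff)
  then show "pa_mult t (pa_basis p) (pa_one n) r = (pa_basis p r :: 'f)"
    unfolding pa_mult_pa_basis_left using assms by (auto simp: pa_one_def pa_basis_def prod_eq_iff)
qed

lemma pa_mult_pa_basis:
  assumes "pend t p = fst q"
  shows "pa_mult t (pa_basis p) (pa_basis q) = (pa_basis (pconcat p q) :: 'a path \<Rightarrow> 'f::field)"
proof
  fix r :: "'a path"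
  have "snd r = snd p @ snd q \<longleftrightarrow> take (length (snd p)) (snd r) = snd p \<and> drop (length (snd p)) (snd r) = snd q"
    by (metis append_eq_conv_conj)
  then show "pa_mult t (pa_basis p) (pa_basis q) r = (pa_basis (pconcat p q) r :: 'f)"
    unfolding pa_mult_pa_basis_left using assms by (auto simp: pa_basis_def pconcat_def prod_eq_iff)
qed

lemma foldr_pa_mult_pa_basis_cycles:
  assumes "v < n" "\<forall>u\<in>set ws. pend t (v, u) = v"
  shows "foldr (pa_mult t) (map (\<lambda>u. pa_basis (v, u)) ws) (pa_one n) =
    (if ws = [] then pa_one n else pa_basis (v, concat ws) :: 'a path \<Rightarrow> 'f::field)"
  using assms(2)
proof (induction ws)
  case (Cons u ws)
  then have "pend t (v, u) = v" by simp
  then show ?case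
    using Cons assms(1) pa_mult_pa_basis_pa_one[of t "(v, u)" n, where 'f = 'f]
      pa_mult_pa_basis[of t "(v, u)" "(v, concat ws)", where 'f = 'f]
    by (simp add: pconcat_def)
qed simp

definition code_word :: "'a list \<Rightarrow> 'a list \<Rightarrow> nat \<Rightarrow> 'a list" where
  "code_word \<alpha> \<beta> k = concat (replicate k \<alpha>) @ \<beta>"

lemma code_word_ne_Nil:
  "length \<alpha> = length \<beta> \<Longrightarrow> \<alpha> \<noteq> \<beta> \<Longrightarrow> code_word \<alpha> \<beta> k \<noteq> []"
  by (auto simp: code_word_def)

lemma code_word_prefix_eq:
  assumes "length \<alpha> = length \<beta>" "\<alpha> \<noteq> \<beta>" "code_word \<alpha> \<beta> k @ xs = code_word \<alpha> \<beta> l @ ys"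
  shows "k = l"
  using assms(3)
proof (induction k arbitrary: l)
  case 0
  show ?case
  proof (cases l)
    case (Suc l')
    then have "\<beta> @ xs = \<alpha> @ code_word \<alpha> \<beta> l' @ ys"
      using 0 by (simp add: code_word_def)
    then show ?thesis using assms(1,2) by (metis append_eq_append_conv)
  qed simp
next
  case (Suc k)
  show ?case
  proof (cases l)
    case 0
    then have "\<alpha> @ code_word \<alpha> \<beta> k @ xs = \<beta> @ ys"
      using Suc.prems by (simp add: code_word_def)
    then show ?thesis using assms(1,2) by (metis append_eq_append_conv)
  next
    case (Suc l')
    then have "code_word \<alpha> \<beta> k @ xs = code_word \<alpha> \<beta> l' @ ys"
      using Suc.prems by (simp add: code_word_def)
    then show ?thesis using Suc.IH Suc by simp
  qed
qed

lemma concat_map_code_word_inj: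
  assumes "length \<alpha> = length \<beta>" "\<alpha> \<noteq> \<beta>"
    and "concat (map (code_word \<alpha> \<beta>) w) = concat (map (code_word \<alpha> \<beta>) w')"
  shows "w = w'"
  using assms(3)
proof (induction w arbitrary: w')
  case Nil
  then show ?case using code_word_ne_Nil[OF assms(1,2)] by (cases w') auto
next
  case (Cons k w)
  then obtain l w'' where w': "w' = l # w''"
    using code_word_ne_Nil[OF assms(1,2)] by (cases w') auto
  with Cons.prems have "k = l"
    by (intro code_word_prefix_eq[OF assms(1,2)]) simp
  with Cons w' show ?case by simp
qed

lemma pa_eval_code_word_cycles:
  fixes f :: "nat list \<Rightarrow> 'f::field"
  assumes "length \<alpha> = length \<beta>" "\<alpha> \<noteq> \<beta>" "\<And>k. is_cycle n E s t v (code_word \<alpha> \<beta> k)"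
    and "f \<in> free_alg"
  shows "pa_eval n t f (\<lambda>k. pa_basis (v, code_word \<alpha> \<beta> k)) (v, concat (map (code_word \<alpha> \<beta>) w)) = f w"
proof -
  let ?X = "\<lambda>k. pa_basis (v, code_word \<alpha> \<beta> k) :: 'a path \<Rightarrow> 'f"
  let ?r = "(v, concat (map (code_word \<alpha> \<beta>) w))"
  have v: "v < n"
    using assms(3)[of 0] by (simp add: is_cycle_def is_path_def)
  have monomial: "foldr (pa_mult t) (map ?X w') (pa_one n) ?r = (if w' = w then 1 else 0)" for w'
  proof (cases "w' = []")
    case True
    then show ?thesis
      using v code_word_ne_Nil[OF assms(1,2)] by (auto simp: pa_one_def)
  next
    case False
    have "\<forall>u\<in>set (map (code_word \<alpha> \<beta>) w'). pend t (v, u) = v"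
      using assms(3) by (simp add: is_cycle_def)
    from foldr_pa_mult_pa_basis_cycles[OF v this, where 'f = 'f] False
    have "foldr (pa_mult t) (map ?X w') (pa_one n) = pa_basis (v, concat (map (code_word \<alpha> \<beta>) w'))"
      by (simp add: comp_def)
    then show ?thesis
      using concat_map_code_word_inj[OF assms(1,2), of w' w] by (auto simp: pa_basis_def)
  qed
  have "pa_eval n t f ?X ?r = (\<Sum>w'\<in>{w. f w \<noteq> 0}. if w' = w then f w' else 0)"
    by (simp add: pa_eval_def monomial if_distrib cong: if_cong)
  also have "\<dots> = f w"
    using assms(4) by (simp add: free_alg_def sum.delta')
  finally show ?thesis .
qed

lemma noncommuting_cycles_imp_no_identity:
  fixes f :: "nat list \<Rightarrow> 'f::field"
  assumes "is_cycle n E s t v u" "is_cycle n E s t v w" "u @ w \<noteq> w @ u"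
    and "f \<in> Id_pa n t (path_algebra n E s t :: ('a path \<Rightarrow> 'f) set)"
  shows "f = (\<lambda>_. 0)"
proof
  fix w0
  let ?code = "code_word (u @ w) (w @ u)"
  have uw: "length (u @ w) = length (w @ u)" "u @ w \<noteq> w @ u"
    using assms(3) by auto
  have cycle: "is_cycle n E s t v (?code k)" for k
    unfolding code_word_def by (intro is_cycle_append is_cycle_concat_replicate assms(1,2))
  have "(pa_basis (v, ?code k) :: 'a path \<Rightarrow> 'f) \<in> path_algebra n E s t" for k
    using cycle by (intro path_algebraI) (auto simp: supp_def pa_basis_def is_cycle_def split: if_splits)
  then have "f \<in> free_alg" "pa_eval n t f (\<lambda>k. pa_basis (v, ?code k)) = (\<lambda>_. 0 :: 'f)"
    using assms(4) by (auto simp: Id_pa_def)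
  then show "f w0 = 0"
    using pa_eval_code_word_cycles[OF uw cycle, of f w0] by simp
qed

lemma zero_in_Id_pa: "(\<lambda>_. 0) \<in> Id_pa n t B"
  by (simp add: Id_pa_def free_alg_def pa_eval_def)

lemma PI_imp_cycles_commute:
  assumes "Id_pa n t (path_algebra n E s t :: ('a path \<Rightarrow> 'f::field) set) \<noteq> {\<lambda>_. 0}"
  shows "cycles_commute n E s t"
proof -
  obtain f where "f \<in> Id_pa n t (path_algebra n E s t :: ('a path \<Rightarrow> 'f) set)" "f \<noteq> (\<lambda>_. 0)"
    using assms zero_in_Id_pa by blast
  then show ?thesis
    unfolding cycles_commute_def using noncommuting_cycles_imp_no_identity by blast
qed

section \<open>Separating FQ by weighted representations\<close>

lemma path_eq_if_mset_eq:
  assumes "quiver n E s t" "cycles_commute n E s t"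
  shows "is_path n E s t (i, xs) \<Longrightarrow> is_path n E s t (i, ys) \<Longrightarrow> pend t (i, xs) = pend t (i, ys) \<Longrightarrow>
    mset xs = mset ys \<Longrightarrow> xs = ys"
proof (induction xs arbitrary: i ys)
  case (Cons a as)
  obtain b bs where ys: "ys = b # bs"
    using Cons.prems(4) by (cases ys) auto
  show ?case
  proof (cases "a = b")
    case True
    have "is_path n E s t (t a, as)" "is_path n E s t (t a, bs)"
      using is_path_appendD2[OF assms(1), of i "[a]"] Cons.prems(1,2) ys True
      by (simp_all add: pend_Pair)
    moreover have "pend t (t a, as) = pend t (t a, bs)"
      using Cons.prems(3) ys True pend_append[of t i "[a]"] by (simp add: pend_Pair)
    moreover have "mset as = mset bs"
      using Cons.prems(4) ys True by simp
    ultimately have "as = bs"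
      by (rule Cons.IH)
    with ys True show ?thesis by simp
  next
    case False
    txt \<open>Both a and b start at i and each occurs later in the other path, so there are cycles
      at i beginning with a and with b; these cannot commute.\<close>
    have "a \<in> set bs" "b \<in> set as"
      using Cons.prems(4) ys False by (metis list.set_intros(1) mset_eq_setD set_ConsD)+
    then obtain as1 as2 bs1 bs2 where as: "as = as1 @ b # as2" and bs: "bs = bs1 @ a # bs2"
      by (meson split_list)
    have path_a: "is_path n E s t (i, (a # as1) @ b # as2)" and path_b: "is_path n E s t (i, (b # bs1) @ a # bs2)"
      using Cons.prems(1,2) ys as bs by simp_all
    have "s a = i" "s b = i"
      using path_a path_b by (simp_all add: is_path_def)
    then have "is_cycle n E s t i (a # as1)" "is_cycle n E s t i (b # bs1)"
      using is_path_appendD1[OF path_a] is_path_pend_eq_source[OF path_a]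
        is_path_appendD1[OF path_b] is_path_pend_eq_source[OF path_b]
      by (simp_all add: is_cycle_def)
    then have "(a # as1) @ (b # bs1) = (b # bs1) @ (a # as1)"
      using assms(2) unfolding cycles_commute_def by blast
    with False show ?thesis by simp
  qed
qed simp

lemma sum_digits_less:
  fixes B :: nat
  assumes "\<forall>i<m. d i < B"
  shows "(\<Sum>i<m. d i * B ^ i) < B ^ m"
  using assms
proof (induction m)
  case (Suc m)
  have "(\<Sum>i<Suc m. d i * B ^ i) = (\<Sum>i<m. d i * B ^ i) + d m * B ^ m"
    by simp
  also have "\<dots> < (d m + 1) * B ^ m"
    using Suc by simp
  also have "\<dots> \<le> B * B ^ m"
    using Suc.prems by (intro mult_right_mono) auto
  finally show ?case by simp
qed simp

lemma sum_digits_inj: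
  fixes B :: nat
  assumes "\<forall>i<m. d i < B" "\<forall>i<m. e i < B" "(\<Sum>i<m. d i * B ^ i) = (\<Sum>i<m. e i * B ^ i)"
  shows "\<forall>i<m. d i = e i"
  using assms
proof (induction m)
  case (Suc m)
  have pos: "B ^ m > 0"
    using Suc.prems(1) by auto
  have less: "(\<Sum>i<m. d i * B ^ i) < B ^ m" "(\<Sum>i<m. e i * B ^ i) < B ^ m"
    using sum_digits_less Suc.prems(1,2) by simp_all
  have sum_eq: "(\<Sum>i<m. d i * B ^ i) + d m * B ^ m = (\<Sum>i<m. e i * B ^ i) + e m * B ^ m"
    using Suc.prems(3) by simp
  have "((\<Sum>i<m. d i * B ^ i) + d m * B ^ m) div B ^ m = d m"
    "((\<Sum>i<m. e i * B ^ i) + e m * B ^ m) div B ^ m = e m"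
    using less pos by (simp_all add: div_mult_self1)
  with sum_eq have "d m = e m" by simp
  moreover have "\<forall>i<m. d i = e i"
    using Suc.IH Suc.prems(1,2) sum_eq \<open>d m = e m\<close> by simp
  ultimately show ?case
    by (simp add: less_Suc_eq)
qed simp

definition arrow_degree :: "'a list \<Rightarrow> nat \<Rightarrow> 'a list \<Rightarrow> nat" where
  "arrow_degree es B xs = (\<Sum>i<length es. count_list xs (es ! i) * B ^ i)"

lemma arrow_degree_append: "arrow_degree es B (xs @ ys) = arrow_degree es B xs + arrow_degree es B ys"
  by (simp add: arrow_degree_def sum.distrib algebra_simps)

lemma multiplicative_weight_power_arrow_degree:
  "multiplicative_weight (\<lambda>xs. (l :: 'f::field) ^ arrow_degree es B xs)"
proof -
  have "arrow_degree es B [] = 0"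
    by (simp add: arrow_degree_def)
  then show ?thesis
    by (simp add: multiplicative_weight_def arrow_degree_append power_add)
qed

lemma mset_eq_if_arrow_degree_eq:
  assumes "set xs \<subseteq> set es" "set ys \<subseteq> set es" "length xs < B" "length ys < B"
    and "arrow_degree es B xs = arrow_degree es B ys"
  shows "mset xs = mset ys"
proof (rule multiset_eqI)
  fix a
  have digits: "\<forall>i<length es. count_list xs (es ! i) = count_list ys (es ! i)"
    using assms(3-5) le_less_trans[OF count_le_length]
    by (intro sum_digits_inj) (auto simp: arrow_degree_def)
  then show "count (mset xs) a = count (mset ys) a"
  proof (cases "a \<in> set es")
    case True
    then obtain i where "i < length es" "es ! i = a"
      by (auto simp: in_set_conv_nth)
    with digits show ?thesis by (auto simp: count_mset)
  next
    case False
    then have "a \<notin> set xs" "a \<notin> set ys"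
      using assms(1,2) by auto
    then show ?thesis by (simp add: count_mset)
  qed
qed

lemma coeff_sum_monom_unique:
  assumes "finite S" "r0 \<in> S" "\<And>r. r \<in> S \<Longrightarrow> d r = d r0 \<Longrightarrow> r = r0"
  shows "coeff (\<Sum>r\<in>S. monom (c r) (d r)) (d r0) = c r0"
proof -
  have "coeff (\<Sum>r\<in>S. monom (c r) (d r)) (d r0) = (\<Sum>r\<in>S. if r = r0 then c r0 else 0)"
    unfolding coeff_sum using assms(3) by (intro sum.cong refl) (auto simp: coeff_monom)
  also have "\<dots> = c r0"
    using assms(1,2) by simp
  finally show ?thesis .
qed

lemma eq_zero_if_path_matrices_eq_zero:
  fixes Y :: "'a path \<Rightarrow> 'f::field_char_0"
  assumes "quiver n E s t" "cycles_commute n E s t" "Y \<in> path_algebra n E s t"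
    and "\<And>G. multiplicative_weight G \<Longrightarrow> path_matrix n t G Y = 0\<^sub>m n n"
  shows "Y = (\<lambda>_. 0)"
proof
  fix r0
  show "Y r0 = 0"
  proof (rule ccontr)
    assume "Y r0 \<noteq> 0"
    then have r0: "r0 \<in> supp Y" by (simp add: supp_def)
    note Y = path_algebraD[OF assms(3)]
    obtain es where es: "set es = E"
      using assms(1) finite_list by (auto simp: quiver_def)
    txt \<open>B exceeds every arrow multiplicity in the support, so the base-B digits of
      arrow_degree are exactly these multiplicities.\<close>
    define B where "B = Suc (\<Sum>r\<in>supp Y. length (snd r))"
    have len: "length (snd r) < B" if "r \<in> supp Y" for r
      using member_le_sum[OF that, of "\<lambda>r. length (snd r)"] Y(1) by (simp add: B_def)
    define i where "i = fst r0"
    define j where "j = pend t r0"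
    have ij: "i < n" "j < n"
      using Y(2)[OF r0] pend_less[OF assms(1)] by (auto simp: i_def j_def is_path_def)
    define S where "S = {r \<in> supp Y. fst r = i \<and> pend t r = j}"
    let ?deg = "\<lambda>r. arrow_degree es B (snd r)"
    define P where "P = (\<Sum>r\<in>S. monom (Y r) (?deg r))"
    have "poly P l = 0" for l
    proof -
      have "poly P l = path_matrix n t (\<lambda>xs. l ^ arrow_degree es B xs) Y $$ (i, j)"
        using ij Y(1)
        by (simp add: P_def S_def poly_sum path_matrix_def sum.inter_filter) (auto simp: poly_monom intro!: sum.cong)
      also have "\<dots> = 0"
        using assms(4)[OF multiplicative_weight_power_arrow_degree] ij by simp
      finally show ?thesis .
    qed
    then have "P = 0"
      using poly_all_0_iff_0 by blast
    moreover have "coeff P (?deg r0) = Y r0"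
      unfolding P_def
    proof (rule coeff_sum_monom_unique)
      show "finite S" "r0 \<in> S"
        using Y(1) r0 by (auto simp: S_def i_def j_def)
      fix r assume r: "r \<in> S" "?deg r = ?deg r0"
      obtain xs ys where r_eq: "r = (i, xs)" and r0_eq: "r0 = (i, ys)"
        using r(1) by (cases r, cases r0) (auto simp: S_def i_def)
      have paths: "is_path n E s t (i, xs)" "is_path n E s t (i, ys)"
        using r(1) r0 Y(2) by (auto simp: S_def r_eq r0_eq)
      moreover have "pend t (i, xs) = pend t (i, ys)"
        using r(1) by (simp add: S_def j_def r_eq r0_eq)
      moreover have "mset xs = mset ys"
        using r paths len[of r] len[OF r0] es
        by (intro mset_eq_if_arrow_degree_eq) (auto simp: S_def is_path_def r_eq r0_eq)
      ultimately show "r = r0"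
        using path_eq_if_mset_eq[OF assms(1,2)] by (simp add: r_eq r0_eq)
    qed
    ultimately show False
      using \<open>Y r0 \<noteq> 0\<close> by simp
  qed
qed

lemma Id_mat_A_pi_subset_Id_pa_FQ_pi:
  assumes "quiver n E s t" "cycles_commute n E s t"
  shows "Id_mat n (A_pi n t \<pi> :: 'f::field_char_0 mat set) \<subseteq> Id_pa n t (FQ_pi n E s t \<pi>)"
proof
  fix f assume f: "f \<in> Id_mat n (A_pi n t \<pi> :: 'f mat set)"
  then have "f \<in> free_alg" by (simp add: Id_mat_def)
  have "pa_eval n t f X = (\<lambda>_. 0)" if X: "\<forall>k. X k \<in> FQ_pi n E s t \<pi>" for X :: "nat \<Rightarrow> 'a path \<Rightarrow> 'f"
  proof (rule eq_zero_if_path_matrices_eq_zero[OF assms])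
    have X_pa: "\<forall>k. X k \<in> path_algebra n E s t"
      using X by (simp add: FQ_pi_def)
    then show "pa_eval n t f X \<in> path_algebra n E s t"
      using pa_eval_in_path_algebra \<open>f \<in> free_alg\<close> by blast
    fix G :: "'a list \<Rightarrow> 'f" assume G: "multiplicative_weight G"
    have "path_matrix n t G (pa_eval n t f X) = mat_eval n f (\<lambda>k. path_matrix n t G (X k))"
      using path_matrix_pa_eval[OF assms(1) G X_pa \<open>f \<in> free_alg\<close>] .
    also have "\<dots> = 0\<^sub>m n n"
    proof -
      have "\<forall>k. path_matrix n t G (X k) \<in> A_pi n t \<pi>"
        using X path_matrix_in_A_pi by blast
      with f show ?thesis by (simp add: Id_mat_def)
    qed
    finally show "path_matrix n t G (pa_eval n t f X) = 0\<^sub>m n n" .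
  qed
  with \<open>f \<in> free_alg\<close> show "f \<in> Id_pa n t (FQ_pi n E s t \<pi>)"
    by (simp add: Id_pa_def)
qed

theorem theorem1:
  fixes n :: nat and E :: "'a set" and s t :: "'a \<Rightarrow> nat"
    and \<pi> :: "'a path set"
  assumes "quiver n E s t"
    and "Id_pa n t (path_algebra n E s t :: ('a path \<Rightarrow> 'f::field_char_0) set) \<noteq> {\<lambda>_. 0}"
    and "\<forall>p\<in>\<pi>. is_path n E s t p"
  shows "Id_pa n t (FQ_pi n E s t \<pi> :: ('a path \<Rightarrow> 'f) set) = Id_mat n (A_pi n t \<pi>)"
proof
  show "Id_pa n t (FQ_pi n E s t \<pi> :: ('a path \<Rightarrow> 'f) set) \<subseteq> Id_mat n (A_pi n t \<pi>)"
    using Id_pa_FQ_pi_subset_Id_mat_A_pi[OF assms(1,3)] .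
  have "cycles_commute n E s t"
    using PI_imp_cycles_commute[OF assms(2)] .
  then show "Id_mat n (A_pi n t \<pi>) \<subseteq> Id_pa n t (FQ_pi n E s t \<pi> :: ('a path \<Rightarrow> 'f) set)"
    using Id_mat_A_pi_subset_Id_pa_FQ_pi[OF assms(1)] by blast
qed

end
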